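(* Let $r\in\mathbb N$, let $M$ be the sub-add move matrix, and let $\Delta$ be the subgraph of $\Gamma_{M,\,2^r}$ induced on $V(\Gamma_{M,\,2^r})\setminus\{(0,0)\}$. Then $\Delta$ is an inverted $PBT_d$ of depth $d=2r-1$. Moreover, $\Gamma_{M,\,2^r}$ is obtained from $\Delta$ by adding the vertex $(0,0)$ together with the two arcs $((2^{r-1},2^{r-1}),(0,0))$ and $((0,0),(0,0))$.
   Context: The sub-add move matrix is $M=\begin{pmatrix}1&-1\\1&1\end{pmatrix}$. For $n\in\mathbb N$, $\Gamma_{M,\,n}$ is the directed graph with vertex set $\mathbb Z_n^2$ and arcs $((a,b),(a-b,a+b))$ for all $(a,b)\in\mathbb Z_n^2$ (computed mod $n$; loops allowed). A perfect binary tree $PBT_d$ is a rooted binary tree in which every non-leaf node has exactly two children and all leaves are at the same depth $d$; it is regarded as directed so that there is a unique directed path from the root (the unique parentless node) to each leaf. It is called inverted if the orientation of every arc is reversed. *)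

theory Defs
  imports Main
begin

text \<open>Vertices of Z_n^2 are represented by pairs of integers in {0..<n}.\<close>
definition subadd_V :: "nat \<Rightarrow> (int \<times> int) set" where
  "subadd_V n = {0..<int n} \<times> {0..<int n}"

text \<open>Arcs of Gamma_{M,n} for the sub-add move matrix M = [[1,-1],[1,1]]:
  (a,b) goes to (a-b, a+b) mod n.\<close>
definition subadd_A :: "nat \<Rightarrow> ((int \<times> int) \<times> (int \<times> int)) set" where
  "subadd_A n = {((a, b), ((a - b) mod int n, (a + b) mod int n)) | a b. (a, b) \<in> subadd_V n}"

definition induced_A :: "('a \<times> 'a) set \<Rightarrow> 'a set \<Rightarrow> ('a \<times> 'a) set" where
  "induced_A A W = A \<inter> (W \<times> W)"

definition pbt_V :: "nat \<Rightarrow> bool list set" where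
  "pbt_V d = {xs. length xs \<le> d}"

definition pbt_A :: "nat \<Rightarrow> (bool list \<times> bool list) set" where
  "pbt_A d = {(xs, xs @ [b]) | xs b. length xs < d}"

definition inverted_PBT :: "'a set \<Rightarrow> ('a \<times> 'a) set \<Rightarrow> nat \<Rightarrow> bool" where
  "inverted_PBT V A d \<longleftrightarrow> A \<subseteq> V \<times> V \<and>
     (\<exists>f. bij_betw f V (pbt_V d) \<and>
          (\<forall>u\<in>V. \<forall>v\<in>V. (u, v) \<in> A \<longleftrightarrow> (f v, f u) \<in> pbt_A d))"

end

theory Submission
  imports Defs
begin

(* Let T(a, b) = (a - b, a + b) mod 2^r and h = 2^(r-1). Since T(T(a, b)) = (-2b, 2a), the
   map T is nilpotent with T^(2r) = 0, and its kernel is {(0, 0), (h, h)}. Hence the two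
   T-preimages of a point differ by (h, h) and are told apart by the bit [h <= a], and every
   nonzero vertex reaches (h, h) in at most 2r - 1 steps. Recording these bits along the path
   from (h, h) gives an injective address of depth at most 2r - 1; as both sides have
   4^r - 1 vertices, it is a bijection onto PBT_(2r-1) reversing the arcs. *)

lemma card_pbt_V: "card (pbt_V d) = 2 ^ Suc d - 1"
proof -
  have "card (pbt_V d) = (\<Sum>i\<le>d. 2 ^ i)"
    using card_lists_length_le[of "UNIV :: bool set" d] by (simp add: pbt_V_def)
  also have "\<dots> = 2 ^ Suc d - 1"
    unfolding mask_eq_sum_exp lessThan_def[symmetric] lessThan_Suc_atMost ..
  finally show ?thesis .
qed

lemma finite_pbt_V: "finite (pbt_V d)"
  using finite_lists_length_le[of "UNIV :: bool set" d] by (simp add: pbt_V_def)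

locale binary_in_tree =
  fixes W :: "'a set" and T :: "'a \<Rightarrow> 'a" and root :: 'a and bit :: "'a \<Rightarrow> bool" and d :: nat
  assumes finite_W: "finite W"
    and card_W: "card W = 2 ^ Suc d - 1"
    and root_in_W: "root \<in> W"
    and T_in_W: "u \<in> W - {root} \<Longrightarrow> T u \<in> W"
    and reaches_root: "u \<in> W \<Longrightarrow> \<exists>j\<le>d. (T ^^ j) u = root"
    and bit_separates:
      "\<lbrakk>u \<in> W - {root}; u' \<in> W - {root}; T u = T u'; bit u = bit u'\<rbrakk> \<Longrightarrow> u = u'"
begin

definition depth :: "'a \<Rightarrow> nat" where
  "depth u = (LEAST j. (T ^^ j) u = root)"

lemma depth_le: "u \<in> W \<Longrightarrow> depth u \<le> d"
  using reaches_root unfolding depth_def by (meson Least_le le_trans)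

lemma depth_root [simp]: "depth root = 0"
  unfolding depth_def by (simp add: Least_eq_0)

lemma depth_T:
  assumes "u \<in> W - {root}"
  shows "depth u = Suc (depth (T u))"
proof -
  obtain j where "(T ^^ j) u = root"
    using reaches_root assms by blast
  then have "depth u = Suc (LEAST m. (T ^^ Suc m) u = root)"
    unfolding depth_def using assms by (intro Least_Suc) auto
  then show ?thesis
    unfolding depth_def funpow_Suc_right comp_def .
qed

primrec path_bits :: "nat \<Rightarrow> 'a \<Rightarrow> bool list" where
  "path_bits 0 u = []"
| "path_bits (Suc m) u = path_bits m (T u) @ [bit u]"

lemma length_path_bits [simp]: "length (path_bits m u) = m"
  by (induction m arbitrary: u) auto

definition code :: "'a \<Rightarrow> bool list" where
  "code u = path_bits (depth u) u"

lemma length_code [simp]: "length (code u) = depth u"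
  by (simp add: code_def)

lemma code_T: "u \<in> W - {root} \<Longrightarrow> code u = code (T u) @ [bit u]"
  by (simp add: code_def depth_T)

lemma inj_on_code: "inj_on code W"
proof -
  have "u = u'" if "u \<in> W" "u' \<in> W" "depth u = m" "code u = code u'" for m u u'
    using that
  proof (induction m arbitrary: u u')
    case 0
    then show ?case
      using depth_T by (metis DiffI Zero_not_Suc length_code singletonD)
  next
    case (Suc m)
    have "depth u' = Suc m"
      using Suc.prems by (metis length_code)
    then have roots: "u \<in> W - {root}" "u' \<in> W - {root}"
      using Suc.prems by auto
    then have "code (T u) = code (T u')" "bit u = bit u'"
      using code_T Suc.prems(4) by auto
    moreover have "depth (T u) = m"
      using depth_T roots Suc.prems(3) by simp
    ultimately have "T u = T u'"
      using Suc.IH T_in_W roots by blast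
    then show ?case
      using bit_separates roots \<open>bit u = bit u'\<close> by blast
  qed
  then show ?thesis
    unfolding inj_on_def by blast
qed

lemma bij_betw_code: "bij_betw code W (pbt_V d)"
proof -
  have "code ` W \<subseteq> pbt_V d"
    using depth_le by (auto simp: pbt_V_def)
  moreover have "card (code ` W) = card (pbt_V d)"
    using inj_on_code by (simp add: card_image card_W card_pbt_V)
  ultimately have "code ` W = pbt_V d"
    using card_subset_eq finite_pbt_V by blast
  then show ?thesis
    using inj_on_code by (simp add: bij_betw_def)
qed

lemma T_iff_code_child:
  assumes "u \<in> W" "v \<in> W"
  shows "u \<noteq> root \<and> v = T u \<longleftrightarrow> (code v, code u) \<in> pbt_A d"
proof
  assume "u \<noteq> root \<and> v = T u"
  then have "code u = code v @ [bit u]" "length (code v) < d"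
    using assms code_T depth_T depth_le[of u] by auto
  then show "(code v, code u) \<in> pbt_A d"
    unfolding pbt_A_def by blast
next
  assume "(code v, code u) \<in> pbt_A d"
  then obtain b where b: "code u = code v @ [b]"
    unfolding pbt_A_def by blast
  then have "u \<noteq> root"
    using length_code[of u] by auto
  then have "code (T u) = code v"
    using code_T assms(1) b by simp
  then show "u \<noteq> root \<and> v = T u"
    using inj_on_code T_in_W assms \<open>u \<noteq> root\<close> unfolding inj_on_def by blast
qed

theorem inverted_PBT_arcs_T: "inverted_PBT W {(u, T u) | u. u \<in> W - {root}} d"
  unfolding inverted_PBT_def
proof (intro conjI exI[of _ code] ballI)
  show "{(u, T u) | u. u \<in> W - {root}} \<subseteq> W \<times> W"
    using T_in_W by blast
  show "bij_betw code W (pbt_V d)"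
    by (rule bij_betw_code)
  show "(u, v) \<in> {(u, T u) | u. u \<in> W - {root}} \<longleftrightarrow> (code v, code u) \<in> pbt_A d"
    if "u \<in> W" "v \<in> W" for u v
    using T_iff_code_child[OF that] that by blast
qed

end

definition subadd_map :: "nat \<Rightarrow> int \<times> int \<Rightarrow> int \<times> int" where
  "subadd_map n u = ((fst u - snd u) mod int n, (fst u + snd u) mod int n)"

lemma subadd_A_eq: "subadd_A n = {(u, subadd_map n u) | u. u \<in> subadd_V n}"
  by (auto simp: subadd_A_def subadd_map_def)

lemma subadd_map_in_V: "0 < n \<Longrightarrow> subadd_map n u \<in> subadd_V n"
  by (simp add: subadd_map_def subadd_V_def)

lemma subadd_map_funpow_in_V: "u \<in> subadd_V n \<Longrightarrow> (subadd_map n ^^ k) u \<in> subadd_V n"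
  by (induction k) (auto simp: subadd_V_def subadd_map_def)

lemma subadd_map_zero [simp]: "subadd_map n (0, 0) = (0, 0)"
  by (simp add: subadd_map_def)

lemma subadd_map_twice:
  "subadd_map n (subadd_map n u) = ((- 2 * snd u) mod int n, (2 * fst u) mod int n)"
  by (simp add: subadd_map_def mod_diff_eq mod_add_eq)

lemma subadd_map_funpow_even:
  assumes "u \<in> subadd_V n"
  shows "\<exists>x y. (subadd_map n ^^ (2 * k)) u = ((2 ^ k * x) mod int n, (2 ^ k * y) mod int n)"
proof (induction k)
  case 0
  have "u = (fst u mod int n, snd u mod int n)"
    using assms by (auto simp: subadd_V_def)
  then show ?case
    by (metis funpow_0 mult_0_right power_0 mult_1)
next
  case (Suc k)
  then obtain x y
    where xy: "(subadd_map n ^^ (2 * k)) u = ((2 ^ k * x) mod int n, (2 ^ k * y) mod int n)"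
    by blast
  have "(subadd_map n ^^ (2 * Suc k)) u =
      subadd_map n (subadd_map n ((subadd_map n ^^ (2 * k)) u))"
    by simp
  also have "\<dots> = ((- 2 * (2 ^ k * y)) mod int n, (2 * (2 ^ k * x)) mod int n)"
    unfolding subadd_map_twice xy fst_conv snd_conv
    by (simp only: mod_mult_right_eq mult_minus_left[symmetric])
  also have "\<dots> = ((2 ^ Suc k * (- y)) mod int n, (2 ^ Suc k * x) mod int n)"
    by (simp add: algebra_simps)
  finally show ?case
    by blast
qed

lemma subadd_map_nilpotent:
  "u \<in> subadd_V (2 ^ r) \<Longrightarrow> (subadd_map (2 ^ r) ^^ (2 * r)) u = (0, 0)"
  using subadd_map_funpow_even[of u "2 ^ r" r] by auto

lemma dvd_abs_less_imp_eq_0: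
  fixes m x :: int
  assumes "m dvd x" "\<bar>x\<bar> < m"
  shows "x = 0"
  using dvd_imp_le_int[OF _ assms(1)] assms(2) by fastforce

lemma subadd_map_eq_same_half:
  fixes h :: nat
  assumes "u \<in> subadd_V (2 * h)" "u' \<in> subadd_V (2 * h)"
    and "subadd_map (2 * h) u = subadd_map (2 * h) u'"
    and "(int h \<le> fst u) = (int h \<le> fst u')"
  shows "u = u'"
proof -
  obtain a b a' b' where u: "u = (a, b)" "u' = (a', b')"
    by (cases u, cases u')
  have bounds: "0 \<le> a" "a < 2 * int h" "0 \<le> b" "b < 2 * int h"
    "0 \<le> a'" "a' < 2 * int h" "0 \<le> b'" "b' < 2 * int h"
    using assms(1,2) by (auto simp: u subadd_V_def)
  have diff: "2 * int h dvd (a - b) - (a' - b')" and sum: "2 * int h dvd (a + b) - (a' + b')"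
    using assms(3) by (auto simp: u subadd_map_def mod_eq_dvd_iff)
  have "2 * int h dvd 2 * (a - a')"
    using dvd_add[OF diff sum] by (simp add: algebra_simps)
  then have "int h dvd a - a'"
    by (metis mult.assoc dvd_mult_cancel_left zero_neq_numeral)
  moreover have "\<bar>a - a'\<bar> < int h"
    using assms(4) bounds by (auto simp: u)
  ultimately have "a = a'"
    using dvd_abs_less_imp_eq_0 by fastforce
  moreover have "b = b'"
    using dvd_abs_less_imp_eq_0[OF sum] bounds \<open>a = a'\<close> by simp
  ultimately show ?thesis
    by (simp add: u)
qed

lemma subadd_map_eq_0_iff:
  fixes h :: nat
  assumes "0 < h" "u \<in> subadd_V (2 * h)"
  shows "subadd_map (2 * h) u = (0, 0) \<longleftrightarrow> u = (0, 0) \<or> u = (int h, int h)"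
proof -
  have "(0, 0) \<in> subadd_V (2 * h)" "(int h, int h) \<in> subadd_V (2 * h)"
    using assms(1) by (auto simp: subadd_V_def)
  moreover have "subadd_map (2 * h) (int h, int h) = (0, 0)"
    by (simp add: subadd_map_def)
  ultimately show ?thesis
    using subadd_map_eq_same_half[OF assms(2)] assms(1) by (cases "int h \<le> fst u") auto
qed

lemma subadd_map_pow2_eq_0_iff:
  assumes "1 \<le> r" "u \<in> subadd_V (2 ^ r)"
  shows "subadd_map (2 ^ r) u = (0, 0) \<longleftrightarrow> u = (0, 0) \<or> u = (2 ^ (r - 1), 2 ^ (r - 1))"
proof -
  have "(2::nat) ^ r = 2 * 2 ^ (r - 1)"
    using assms(1) by (metis Suc_diff_le diff_Suc_1 power_Suc)
  then show ?thesis
    using subadd_map_eq_0_iff[of "2 ^ (r - 1)" u] assms(2) by simp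
qed

lemma subadd_binary_in_tree:
  assumes "1 \<le> r"
  shows "binary_in_tree (subadd_V (2 ^ r) - {(0, 0)}) (subadd_map (2 ^ r))
    (2 ^ (r - 1), 2 ^ (r - 1)) (\<lambda>u. 2 ^ (r - 1) \<le> fst u) (2 * r - 1)"
proof -
  define h :: nat where "h = 2 ^ (r - 1)"
  have n: "(2::nat) ^ r = 2 * h"
    using assms by (metis h_def Suc_diff_le diff_Suc_1 power_Suc)
  let ?V = "subadd_V (2 ^ r)" and ?T = "subadd_map (2 ^ r)" and ?root = "(int h, int h)"
  have root_V: "?root \<in> ?V"
    by (simp add: n subadd_V_def h_def)
  have kernel: "?T u = (0, 0) \<longleftrightarrow> u = (0, 0) \<or> u = ?root" if "u \<in> ?V" for u
    using subadd_map_pow2_eq_0_iff[OF assms that] by (simp add: h_def)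
  have "binary_in_tree (?V - {(0, 0)}) ?T ?root (\<lambda>u. int h \<le> fst u) (2 * r - 1)"
  proof
    show "finite (?V - {(0, 0)})"
      by (simp add: subadd_V_def)
    have "card ?V = 2 ^ r * 2 ^ r"
      by (simp add: subadd_V_def nat_power_eq)
    also have "\<dots> = 2 ^ Suc (2 * r - 1)"
      using assms by (simp flip: power_add)
    finally show "card (?V - {(0, 0)}) = 2 ^ Suc (2 * r - 1) - 1"
      by (simp add: subadd_V_def)
    show "?root \<in> ?V - {(0, 0)}"
      using root_V by (simp add: h_def)
    show "?T u \<in> ?V - {(0, 0)}" if "u \<in> ?V - {(0, 0)} - {?root}" for u
      using that kernel subadd_map_in_V by auto
    show "\<exists>j\<le>2 * r - 1. (?T ^^ j) u = ?root" if "u \<in> ?V - {(0, 0)}" for u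
    proof -
      have "(?T ^^ (2 * r)) u = (0, 0)" "(?T ^^ 0) u \<noteq> (0, 0)"
        using subadd_map_nilpotent that by auto
      then obtain j where "j < 2 * r" "(?T ^^ j) u \<noteq> (0, 0)" "?T ((?T ^^ j) u) = (0, 0)"
        using ex_least_nat_less[where P = "\<lambda>i. (?T ^^ i) u = (0, 0)"] by auto
      then show ?thesis
        using kernel subadd_map_funpow_in_V that by (intro exI[of _ j]) auto
    qed
    show "u = u'" if "u \<in> ?V - {(0, 0)} - {?root}" "u' \<in> ?V - {(0, 0)} - {?root}"
      "?T u = ?T u'" "(int h \<le> fst u) = (int h \<le> fst u')" for u u'
      using subadd_map_eq_same_half[of u h u'] that by (simp add: n)
  qed
  then show ?thesis
    by (simp add: h_def)
qed

theorem theorem5p6: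
  fixes r :: nat
  assumes "r \<ge> 1"
  defines "n \<equiv> 2 ^ r"
  defines "W \<equiv> subadd_V n - {(0, 0)}"
  shows "inverted_PBT W (induced_A (subadd_A n) W) (2 * r - 1)
    \<and> subadd_V n = W \<union> {(0, 0)}
    \<and> subadd_A n = induced_A (subadd_A n) W \<union>
        {((2 ^ (r - 1), 2 ^ (r - 1)), (0, 0)), ((0, 0), (0, 0))}"
proof -
  define root :: "int \<times> int" where "root = (2 ^ (r - 1), 2 ^ (r - 1))"
  interpret binary_in_tree W "subadd_map n" root "\<lambda>u. 2 ^ (r - 1) \<le> fst u" "2 * r - 1"
    unfolding W_def n_def root_def using assms(1) by (rule subadd_binary_in_tree)
  have kernel: "subadd_map n u = (0, 0) \<longleftrightarrow> u = (0, 0) \<or> u = root" if "u \<in> subadd_V n" for u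
    using subadd_map_pow2_eq_0_iff[OF assms(1)] that unfolding n_def root_def by blast
  have zero_V: "(0, 0) \<in> subadd_V n"
    by (simp add: n_def subadd_V_def)
  have T_in_W_iff: "subadd_map n u \<in> W \<longleftrightarrow> u \<noteq> root" if "u \<in> W" for u
    using kernel subadd_map_in_V that unfolding W_def n_def by auto
  have "induced_A (subadd_A n) W = {(u, subadd_map n u) | u. u \<in> W - {root}}"
    using T_in_W_iff unfolding induced_A_def subadd_A_eq W_def by blast
  moreover have "subadd_A n =
      {(u, subadd_map n u) | u. u \<in> W - {root}} \<union> {(root, (0, 0)), ((0, 0), (0, 0))}"
    using kernel[of root] root_in_W zero_V unfolding subadd_A_eq W_def by auto
  ultimately show ?thesis
    using inverted_PBT_arcs_T zero_V unfolding W_def root_def by auto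
qed

end
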